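(* Let $\mathcal{K}^2_*$ denote the set of strictly convex bodies in $\mathbb{R}^2$, with the Hausdorff metric. The map $K\mapsto \mathcal{M}_K$ from $\mathcal{K}^2_*$ to the space of nonempty compact subsets of $\mathbb{R}^2$ (with the Hausdorff metric) is continuous.
   Context: A convex body is a nonempty compact convex subset of $\mathbb{R}^2$; it is strictly convex if its boundary contains no nondegenerate segment. For $K$ strictly convex and $u\in\mathbb{S}^1$, $x_K(u)$ denotes the unique point of $K$ on its supporting line with outer unit normal $u$, and $m_K(u)=\frac12[x_K(u)+x_K(-u)]$. The middle hedgehog is $\mathcal{M}_K=\{m_K(u): u\in\mathbb{S}^1\}$. *)

theory Defs
  imports "HOL-Analysis.Analysis"
begin

definition hausdorff_dist :: "'a::metric_space set \<Rightarrow> 'a set \<Rightarrow> real" where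
  "hausdorff_dist A B = max (SUP a\<in>A. infdist a B) (SUP b\<in>B. infdist b A)"

definition convex_body :: "(real^2) set \<Rightarrow> bool" where
  "convex_body K \<longleftrightarrow> K \<noteq> {} \<and> compact K \<and> convex K"

definition strictly_convex_body :: "(real^2) set \<Rightarrow> bool" where
  "strictly_convex_body K \<longleftrightarrow> convex_body K \<and>
     (\<forall>a b. a \<noteq> b \<longrightarrow> \<not> closed_segment a b \<subseteq> frontier K)"

text \<open>x_K(u): the (unique, for strictly convex K) point of K on its supporting line
  with outer unit normal u.\<close>
definition support_point :: "(real^2) set \<Rightarrow> real^2 \<Rightarrow> real^2" where
  "support_point K u = (THE x. x \<in> K \<and> (\<forall>y\<in>K. y \<bullet> u \<le> x \<bullet> u))"

definition mid_point :: "(real^2) set \<Rightarrow> real^2 \<Rightarrow> real^2" where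
  "mid_point K u = (1/2) *\<^sub>R (support_point K u + support_point K (- u))"

definition middle_hedgehog :: "(real^2) set \<Rightarrow> (real^2) set" where
  "middle_hedgehog K = mid_point K ` sphere 0 1"

end

theory Submission
  imports Defs
begin

text \<open>
  For a strictly convex body the maximiser of a linear functional is unique, and compactness
  turns uniqueness into a quantitative gap: points of \<open>K\<close> far from \<open>x\<^sub>K(u)\<close> lie strictly
  below the supporting line.  If \<open>L\<close> is Hausdorff-close to \<open>K\<close> and \<open>v\<close> close to \<open>u\<close>, the point
  \<open>x\<^sub>L(v)\<close> is close to some point of \<open>K\<close> that is almost as high as \<open>x\<^sub>K(u)\<close> in direction \<open>u\<close>,
  hence close to \<open>x\<^sub>K(u)\<close>.  Compactness of the circle makes this uniform in the direction, so
  \<open>x\<^sub>L\<close> is uniformly close to \<open>x\<^sub>K\<close>, and so are the midpoints \<open>m\<^sub>L\<close> and \<open>m\<^sub>K\<close>.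
\<close>

lemma linear_maximizer_in_frontier:
  fixes K :: "'a::real_inner set"
  assumes "u \<noteq> 0" "z \<in> K" "\<forall>y\<in>K. y \<bullet> u \<le> z \<bullet> u"
  shows "z \<in> frontier K"
proof -
  have "z \<notin> interior K"
  proof
    assume "z \<in> interior K"
    then obtain r where r: "r > 0" "ball z r \<subseteq> K" using mem_interior by blast
    define w where "w = z + (r / 2 / norm u) *\<^sub>R u"
    have "w \<in> K" using r assms(1) by (auto simp: w_def dist_norm)
    then have "w \<bullet> u \<le> z \<bullet> u" using assms(3) by auto
    moreover have "w \<bullet> u = z \<bullet> u + (r / 2 / norm u) * (u \<bullet> u)"
      by (simp add: w_def inner_add_left)
    moreover have "(r / 2 / norm u) * (u \<bullet> u) > 0" using r assms(1) by simp
    ultimately show False by linarith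
  qed
  then show ?thesis using assms(2) closure_subset by (auto simp: frontier_def)
qed

lemma strictly_convex_body_compact: "strictly_convex_body K \<Longrightarrow> compact K"
  and strictly_convex_body_nonempty: "strictly_convex_body K \<Longrightarrow> K \<noteq> {}"
  by (simp_all add: strictly_convex_body_def convex_body_def)

lemma strictly_convex_body_maximizer_unique:
  assumes K: "strictly_convex_body K" and "u \<noteq> 0"
    and x: "x \<in> K" "\<forall>z\<in>K. z \<bullet> u \<le> x \<bullet> u"
    and y: "y \<in> K" "\<forall>z\<in>K. z \<bullet> u \<le> y \<bullet> u"
  shows "x = y"
proof (rule ccontr)
  assume "x \<noteq> y"
  have "convex K" using K by (simp add: strictly_convex_body_def convex_body_def)
  have "x \<bullet> u = y \<bullet> u" using x y by force
  have "closed_segment x y \<subseteq> frontier K"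
  proof
    fix z assume z: "z \<in> closed_segment x y"
    then obtain t where t: "z = (1 - t) *\<^sub>R x + t *\<^sub>R y"
      by (auto simp: closed_segment_def)
    have "z \<in> K" using z \<open>convex K\<close> x(1) y(1) closed_segment_subset by blast
    moreover have "z \<bullet> u = x \<bullet> u"
      using \<open>x \<bullet> u = y \<bullet> u\<close> by (simp add: t inner_add_left algebra_simps)
    ultimately show "z \<in> frontier K"
      using linear_maximizer_in_frontier[OF \<open>u \<noteq> 0\<close>] x(2) by simp
  qed
  then show False using K \<open>x \<noteq> y\<close> by (auto simp: strictly_convex_body_def)
qed

lemma support_point_maximizes:
  assumes K: "strictly_convex_body K" and "u \<noteq> 0"
  shows "support_point K u \<in> K" "\<forall>y\<in>K. y \<bullet> u \<le> support_point K u \<bullet> u"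
proof -
  have "continuous_on K (\<lambda>y. y \<bullet> u)" by (intro continuous_intros)
  then obtain x where "x \<in> K" "\<forall>y\<in>K. y \<bullet> u \<le> x \<bullet> u"
    using continuous_attains_sup[OF strictly_convex_body_compact[OF K]
        strictly_convex_body_nonempty[OF K]] by blast
  then have "\<exists>!x. x \<in> K \<and> (\<forall>y\<in>K. y \<bullet> u \<le> x \<bullet> u)"
    using strictly_convex_body_maximizer_unique[OF K \<open>u \<noteq> 0\<close>] by blast
  from theI'[OF this] show "support_point K u \<in> K" "\<forall>y\<in>K. y \<bullet> u \<le> support_point K u \<bullet> u"
    unfolding support_point_def by auto
qed

lemma support_point_height_gap:
  assumes K: "strictly_convex_body K" and "u \<noteq> 0" and "e > 0"
  obtains \<eta> where "\<eta> > 0"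
    "\<And>y. y \<in> K \<Longrightarrow> e \<le> dist y (support_point K u) \<Longrightarrow> y \<bullet> u \<le> support_point K u \<bullet> u - \<eta>"
proof (cases "K - ball (support_point K u) e = {}")
  case True
  show ?thesis by (rule that[of 1]) (use True in \<open>auto simp: dist_commute\<close>)
next
  case False
  let ?p = "support_point K u" and ?F = "K - ball (support_point K u) e"
  have "compact ?F" using strictly_convex_body_compact[OF K] by (simp add: compact_diff)
  moreover have "continuous_on ?F (\<lambda>y. y \<bullet> u)" by (intro continuous_intros)
  ultimately obtain c where c: "c \<in> ?F" "\<forall>y\<in>?F. y \<bullet> u \<le> c \<bullet> u"
    using continuous_attains_sup[OF _ False] by blast
  have "c \<bullet> u < ?p \<bullet> u"
  proof (rule ccontr)
    assume "\<not> c \<bullet> u < ?p \<bullet> u"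
    then have "\<forall>y\<in>K. y \<bullet> u \<le> c \<bullet> u" using support_point_maximizes(2)[OF K \<open>u \<noteq> 0\<close>] by force
    then have "c = ?p"
      using strictly_convex_body_maximizer_unique[OF K \<open>u \<noteq> 0\<close>] c(1)
        support_point_maximizes[OF K \<open>u \<noteq> 0\<close>] by blast
    then show False using c(1) \<open>e > 0\<close> by simp
  qed
  show ?thesis
    by (rule that[of "?p \<bullet> u - c \<bullet> u"]) (use \<open>c \<bullet> u < ?p \<bullet> u\<close> c in \<open>auto simp: dist_commute\<close>)
qed

lemma hausdorff_dist_commute: "hausdorff_dist A B = hausdorff_dist B A"
  by (simp add: hausdorff_dist_def max.commute)

lemma hausdorff_dist_less_imp_near:
  fixes A B :: "'a::heine_borel set"
  assumes "bounded A" "compact B" "B \<noteq> {}" "hausdorff_dist A B < d" "a \<in> A"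
  obtains b where "b \<in> B" "dist a b < d"
proof -
  obtain b0 where b0: "b0 \<in> B" using assms(3) by auto
  obtain R where R: "\<forall>x\<in>A. dist b0 x \<le> R" using assms(1) bounded_any_center by metis
  have "bdd_above ((\<lambda>x. infdist x B) ` A)"
  proof (rule bdd_aboveI2)
    fix x assume "x \<in> A"
    then have "dist x b0 \<le> R" using R by (metis dist_commute)
    then show "infdist x B \<le> R" using infdist_le[OF b0, of x] by linarith
  qed
  then have "infdist a B \<le> (SUP x\<in>A. infdist x B)" using assms(5) by (rule cSUP_upper2) simp
  then have "infdist a B < d" using assms(4) unfolding hausdorff_dist_def by linarith
  moreover obtain b where "b \<in> B" "infdist a B = dist a b"
    using infdist_attains_inf[OF compact_imp_closed[OF assms(2)] assms(3)] by blast
  ultimately show ?thesis using that by auto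
qed

lemma hausdorff_dist_image_le:
  assumes "\<forall>u\<in>S. dist (f u) (g u) \<le> c" "S \<noteq> {}"
  shows "hausdorff_dist (f ` S) (g ` S) \<le> c"
proof -
  have "(SUP a\<in>f ` S. infdist a (g ` S)) \<le> c" if "\<forall>u\<in>S. dist (f u) (g u) \<le> c" for f g
  proof (rule cSUP_least)
    fix a assume "a \<in> f ` S"
    then obtain u where "u \<in> S" "a = f u" by auto
    then show "infdist a (g ` S) \<le> c"
      using infdist_le[of "g u" "g ` S" "f u"] that by force
  qed (use assms(2) in simp)
  from this[of f g] this[of g f] show ?thesis
    using assms(1) unfolding hausdorff_dist_def by (simp add: dist_commute)
qed

lemma hausdorff_dist_self_le: "A \<noteq> {} \<Longrightarrow> hausdorff_dist A A \<le> 0"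
  using hausdorff_dist_image_le[of A "\<lambda>x. x" "\<lambda>x. x" 0] by simp

lemma inner_gt_of_dist_less:
  fixes x y u :: "'a::real_inner"
  assumes "norm u = 1" "dist x y < d"
  shows "y \<bullet> u - d < x \<bullet> u"
proof -
  have "\<bar>(y - x) \<bullet> u\<bar> \<le> norm (y - x) * norm u" by (rule Cauchy_Schwarz_ineq2)
  then show ?thesis using assms by (simp add: dist_norm norm_minus_commute inner_diff_left)
qed

lemma inner_ge_of_direction_dist_le:
  fixes x u v :: "'a::real_inner"
  assumes "norm x \<le> R" "dist u v \<le> d"
  shows "x \<bullet> u - R * d \<le> x \<bullet> v"
proof -
  have "\<bar>x \<bullet> (u - v)\<bar> \<le> norm x * norm (u - v)" by (rule Cauchy_Schwarz_ineq2)
  also have "\<dots> \<le> R * d"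
    using assms order_trans[OF norm_ge_zero assms(1)] by (intro mult_mono) (auto simp: dist_norm)
  finally show ?thesis by (simp add: inner_diff_right)
qed

text \<open>The chain \<open>k\<bullet>u \<approx> q\<bullet>u \<approx> q\<bullet>v \<ge> l\<bullet>v \<approx> p\<bullet>v \<approx> p\<bullet>u\<close>, where \<open>l \<in> L\<close> is near \<open>p = x\<^sub>K(u)\<close>
  and \<open>k \<in> K\<close> is near \<open>q = x\<^sub>L(v)\<close>.\<close>
lemma support_point_near_high_point:
  assumes K: "strictly_convex_body K" and L: "strictly_convex_body L"
    and R: "\<forall>y\<in>K. norm y \<le> R"
    and u: "norm u = 1" and v: "norm v = 1" and "dist v u < d" "d \<le> 1"
    and "hausdorff_dist K L < d"
  obtains k where "k \<in> K" "dist (support_point L v) k < d"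
    "support_point K u \<bullet> u - (2 * R + 3) * d < k \<bullet> u"
proof -
  have "u \<noteq> 0" "v \<noteq> 0" using u v by auto
  define p where "p = support_point K u"
  define q where "q = support_point L v"
  note p = support_point_maximizes[OF K \<open>u \<noteq> 0\<close>, folded p_def]
  note q = support_point_maximizes[OF L \<open>v \<noteq> 0\<close>, folded q_def]
  have K': "bounded K" "compact K" "K \<noteq> {}" and L': "bounded L" "compact L" "L \<noteq> {}"
    using K L strictly_convex_body_compact strictly_convex_body_nonempty compact_imp_bounded
    by auto
  obtain l where l: "l \<in> L" "dist p l < d"
    using hausdorff_dist_less_imp_near[OF K'(1) L'(2,3) \<open>hausdorff_dist K L < d\<close> p(1)] .
  obtain k where k: "k \<in> K" "dist q k < d"
    using hausdorff_dist_less_imp_near[OF L'(1) K'(2,3) _ q(1)] \<open>hausdorff_dist K L < d\<close>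
    by (metis hausdorff_dist_commute)
  have "norm q \<le> R + 1"
    using R k \<open>d \<le> 1\<close> norm_triangle_ineq[of "q - k" k] by (force simp: dist_norm)
  have "q \<bullet> u - d < k \<bullet> u"
    using inner_gt_of_dist_less[OF u, of k q] k(2) by (simp add: dist_commute)
  moreover have "q \<bullet> v - (R + 1) * d \<le> q \<bullet> u"
    using inner_ge_of_direction_dist_le[OF \<open>norm q \<le> R + 1\<close>] \<open>dist v u < d\<close> by simp
  moreover have "l \<bullet> v \<le> q \<bullet> v" using q(2) l(1) by blast
  moreover have "p \<bullet> v - d < l \<bullet> v" using inner_gt_of_dist_less[OF v] l(2) by (simp add: dist_commute)
  moreover have "p \<bullet> u - R * d \<le> p \<bullet> v"
    using inner_ge_of_direction_dist_le[of p R u v d] R p(1) \<open>dist v u < d\<close>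
    by (simp add: dist_commute)
  ultimately have "p \<bullet> u - (2 * R + 3) * d < k \<bullet> u" by (simp add: algebra_simps)
  then show ?thesis using that k unfolding p_def q_def by blast
qed

lemma support_point_jointly_continuous:
  assumes K: "strictly_convex_body K" and u: "norm u = 1" and "e > 0"
  shows "\<exists>d>0. \<forall>v\<in>sphere 0 1. \<forall>L. strictly_convex_body L \<and> dist v u < d \<and>
            hausdorff_dist K L < d \<longrightarrow> dist (support_point L v) (support_point K u) < e"
proof -
  have "u \<noteq> 0" using u by auto
  obtain \<eta> where "\<eta> > 0" and gap:
    "\<And>y. y \<in> K \<Longrightarrow> e / 2 \<le> dist y (support_point K u) \<Longrightarrow>
       y \<bullet> u \<le> support_point K u \<bullet> u - \<eta>"
    using support_point_height_gap[OF K \<open>u \<noteq> 0\<close> half_gt_zero[OF \<open>e > 0\<close>]] by blast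
  obtain R where "R \<ge> 0" and R: "\<forall>y\<in>K. norm y \<le> R"
    using compact_imp_bounded[OF strictly_convex_body_compact[OF K]] bounded_pos
    by (metis less_imp_le)
  define d where "d = min (min 1 (e / 2)) (\<eta> / (2 * R + 3))"
  have "d > 0" using \<open>e > 0\<close> \<open>\<eta> > 0\<close> \<open>R \<ge> 0\<close> by (simp add: d_def)
  have "d \<le> 1" "d \<le> e / 2" "d \<le> \<eta> / (2 * R + 3)"
    unfolding d_def by (meson min.cobounded1 min.cobounded2 order_trans)+
  then have "(2 * R + 3) * d \<le> \<eta>"
    using \<open>R \<ge> 0\<close> by (simp add: pos_le_divide_eq mult.commute)
  show ?thesis
  proof (intro exI[of _ d] conjI \<open>d > 0\<close> ballI allI impI)
    fix v L assume "v \<in> sphere 0 (1::real)"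
      and "strictly_convex_body L \<and> dist v u < d \<and> hausdorff_dist K L < d"
    then have L: "strictly_convex_body L" and v: "norm v = 1"
      and "dist v u < d" "hausdorff_dist K L < d" by auto
    obtain k where "k \<in> K" "dist (support_point L v) k < d"
      and high: "support_point K u \<bullet> u - (2 * R + 3) * d < k \<bullet> u"
      using support_point_near_high_point[OF K L R u v \<open>dist v u < d\<close> \<open>d \<le> 1\<close>
          \<open>hausdorff_dist K L < d\<close>] .
    have "dist k (support_point K u) < e / 2"
    proof (rule ccontr)
      assume "\<not> dist k (support_point K u) < e / 2"
      then have "k \<bullet> u \<le> support_point K u \<bullet> u - \<eta>" using gap[OF \<open>k \<in> K\<close>] by simp
      then show False using high \<open>(2 * R + 3) * d \<le> \<eta>\<close> by linarith
    qed
    then show "dist (support_point L v) (support_point K u) < e"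
      using \<open>dist (support_point L v) k < d\<close> \<open>d \<le> e / 2\<close>
        dist_triangle[of "support_point L v" "support_point K u" k] by linarith
  qed
qed

lemma uniform_closeness_on_compact:
  fixes f :: "'p \<Rightarrow> 'a::metric_space \<Rightarrow> 'b::metric_space" and \<rho> :: "'p \<Rightarrow> real"
  assumes "compact S" "\<rho> p\<^sub>0 \<le> 0" "e > 0"
    and joint: "\<And>u e. u \<in> S \<Longrightarrow> e > 0 \<Longrightarrow> \<exists>d>0. \<forall>v\<in>S. \<forall>p.
              P p \<and> dist v u < d \<and> \<rho> p < d \<longrightarrow> dist (f p v) (f p\<^sub>0 u) < e"
    and "P p\<^sub>0"
  shows "\<exists>d>0. \<forall>p. P p \<and> \<rho> p < d \<longrightarrow> (\<forall>v\<in>S. dist (f p v) (f p\<^sub>0 v) < e)"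
proof -
  have "\<forall>u\<in>S. \<exists>d>0. \<forall>v\<in>S. \<forall>p.
          P p \<and> dist v u < d \<and> \<rho> p < d \<longrightarrow> dist (f p v) (f p\<^sub>0 u) < e / 2"
    by (intro ballI joint) (use \<open>e > 0\<close> in auto)
  then obtain D where D: "\<And>u. u \<in> S \<Longrightarrow> D u > 0"
    "\<And>u v p. u \<in> S \<Longrightarrow> v \<in> S \<Longrightarrow> P p \<Longrightarrow> dist v u < D u \<Longrightarrow> \<rho> p < D u \<Longrightarrow>
       dist (f p v) (f p\<^sub>0 u) < e / 2"
    by (metis bchoice)
  have "S \<subseteq> (\<Union>u\<in>S. ball u (D u / 2))" using D(1) by force
  then obtain T where T: "T \<subseteq> S" "finite T" "S \<subseteq> (\<Union>u\<in>T. ball u (D u / 2))"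
    by (rule compactE_image[OF \<open>compact S\<close> open_ball])
  define d where "d = Min (insert 1 ((\<lambda>u. D u / 2) ` T))"
  have "d > 0" using T(1,2) D(1) by (auto simp: d_def)
  have d_le: "d \<le> D u / 2" if "u \<in> T" for u
    unfolding d_def using T(2) that by (intro Min_le) auto
  show ?thesis
  proof (intro exI[of _ d] conjI \<open>d > 0\<close> allI impI ballI)
    fix p v assume p: "P p \<and> \<rho> p < d" and "v \<in> S"
    then obtain u where "u \<in> T" "dist u v < D u / 2" using T(3) by auto
    then have "u \<in> S" using T(1) by blast
    have "dist v u < D u" using \<open>dist u v < D u / 2\<close> D(1)[OF \<open>u \<in> S\<close>]
      by (simp add: dist_commute)
    moreover have "\<rho> p < D u" "\<rho> p\<^sub>0 < D u"
      using p d_le[OF \<open>u \<in> T\<close>] \<open>\<rho> p\<^sub>0 \<le> 0\<close> D(1)[OF \<open>u \<in> S\<close>] by linarith+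
    ultimately have "dist (f p v) (f p\<^sub>0 u) < e / 2" "dist (f p\<^sub>0 v) (f p\<^sub>0 u) < e / 2"
      using D(2) \<open>u \<in> S\<close> \<open>v \<in> S\<close> p \<open>P p\<^sub>0\<close> by blast+
    then show "dist (f p v) (f p\<^sub>0 v) < e"
      using dist_triangle2[of "f p v" "f p\<^sub>0 v" "f p\<^sub>0 u"] by linarith
  qed
qed

lemma support_point_uniformly_close:
  assumes K: "strictly_convex_body K" and "e > 0"
  shows "\<exists>d>0. \<forall>L. strictly_convex_body L \<and> hausdorff_dist K L < d \<longrightarrow>
            (\<forall>v\<in>sphere 0 1. dist (support_point L v) (support_point K v) < e)"
proof (rule uniform_closeness_on_compact[where f = support_point and \<rho> = "hausdorff_dist K"
      and p\<^sub>0 = K and P = strictly_convex_body, OF compact_sphere hausdorff_dist_self_le[OF strictly_convex_body_nonempty[OF K]] \<open>e > 0\<close> _ K])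
  fix u :: "real^2" and e :: real assume "u \<in> sphere 0 1" "e > 0"
  then show "\<exists>d>0. \<forall>v\<in>sphere 0 1. \<forall>L. strictly_convex_body L \<and> dist v u < d \<and>
      hausdorff_dist K L < d \<longrightarrow> dist (support_point L v) (support_point K u) < e"
    using support_point_jointly_continuous[OF K] by simp
qed

lemma continuous_on_support_point:
  assumes K: "strictly_convex_body K"
  shows "continuous_on (sphere 0 1) (support_point K)"
  unfolding continuous_on_iff
proof (intro ballI allI impI)
  fix u e assume "u \<in> sphere (0::real^2) 1" "(e::real) > 0"
  then obtain d where "d > 0" and d: "\<forall>v\<in>sphere 0 1. \<forall>L. strictly_convex_body L \<and> dist v u < d \<and>
            hausdorff_dist K L < d \<longrightarrow> dist (support_point L v) (support_point K u) < e"
    using support_point_jointly_continuous[OF K] by force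
  moreover have "hausdorff_dist K K < d"
    using hausdorff_dist_self_le[OF strictly_convex_body_nonempty[OF K]] \<open>d > 0\<close> by linarith
  ultimately show "\<exists>d>0. \<forall>v\<in>sphere 0 1. dist v u < d \<longrightarrow>
      dist (support_point K v) (support_point K u) < e"
    using K by blast
qed

lemma continuous_on_mid_point:
  assumes "strictly_convex_body K"
  shows "continuous_on (sphere 0 1) (mid_point K)"
proof -
  note cont = continuous_on_support_point[OF assms]
  have "continuous_on (sphere 0 1) (\<lambda>u. support_point K (- u))"
    by (rule continuous_on_compose2[OF cont]) (auto intro: continuous_intros)
  with cont show ?thesis unfolding mid_point_def by (intro continuous_intros)
qed

lemma dist_scaleR_half_sum_le:
  fixes a b c d :: "'a::real_normed_vector"
  assumes "dist a c \<le> r" "dist b d \<le> r"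
  shows "dist ((1/2) *\<^sub>R (a + b)) ((1/2) *\<^sub>R (c + d)) \<le> r"
proof -
  have "(1/2) *\<^sub>R (a + b) - (1/2) *\<^sub>R (c + d) = (1/2) *\<^sub>R ((a - c) + (b - d))"
    by (simp add: algebra_simps)
  then have "dist ((1/2) *\<^sub>R (a + b)) ((1/2) *\<^sub>R (c + d)) = norm ((a - c) + (b - d)) / 2"
    by (simp add: dist_norm)
  also have "\<dots> \<le> (norm (a - c) + norm (b - d)) / 2"
    using norm_triangle_ineq[of "a - c" "b - d"] by simp
  also have "\<dots> \<le> r" using assms by (simp add: dist_norm)
  finally show ?thesis .
qed

lemma hausdorff_dist_middle_hedgehog_le:
  assumes "\<forall>v\<in>sphere 0 1. dist (support_point K v) (support_point L v) \<le> c"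
  shows "hausdorff_dist (middle_hedgehog K) (middle_hedgehog L) \<le> c"
  unfolding middle_hedgehog_def
proof (rule hausdorff_dist_image_le)
  show "\<forall>u\<in>sphere 0 1. dist (mid_point K u) (mid_point L u) \<le> c"
    unfolding mid_point_def using assms by (auto intro: dist_scaleR_half_sum_le)
qed simp

theorem mainTheorem3:
  shows "(\<forall>K. strictly_convex_body K \<longrightarrow>
            middle_hedgehog K \<noteq> {} \<and> compact (middle_hedgehog K)) \<and>
         (\<forall>K. strictly_convex_body K \<longrightarrow>
            (\<forall>e>0. \<exists>d>0. \<forall>L. strictly_convex_body L \<and> hausdorff_dist K L < d \<longrightarrow>
               hausdorff_dist (middle_hedgehog K) (middle_hedgehog L) < e))"
proof (intro conjI allI impI)
  fix K assume K: "strictly_convex_body K"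
  show "middle_hedgehog K \<noteq> {}" by (simp add: middle_hedgehog_def)
  show "compact (middle_hedgehog K)" unfolding middle_hedgehog_def
    by (rule compact_continuous_image[OF continuous_on_mid_point[OF K] compact_sphere])
next
  fix K and e :: real assume K: "strictly_convex_body K" and "e > 0"
  then obtain d where "d > 0" and d: "\<forall>L. strictly_convex_body L \<and> hausdorff_dist K L < d \<longrightarrow>
      (\<forall>v\<in>sphere 0 1. dist (support_point L v) (support_point K v) < e / 2)"
    using support_point_uniformly_close[OF K, of "e / 2"] by auto
  have "hausdorff_dist (middle_hedgehog K) (middle_hedgehog L) < e"
    if "strictly_convex_body L \<and> hausdorff_dist K L < d" for L
  proof -
    have "\<forall>v\<in>sphere 0 1. dist (support_point L v) (support_point K v) < e / 2"
      using d that by blast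
    then have "\<forall>v\<in>sphere 0 1. dist (support_point K v) (support_point L v) \<le> e / 2"
      by (simp add: dist_commute less_imp_le)
    from hausdorff_dist_middle_hedgehog_le[OF this] show ?thesis using \<open>e > 0\<close> by linarith
  qed
  with \<open>d > 0\<close> show "\<exists>d>0. \<forall>L. strictly_convex_body L \<and> hausdorff_dist K L < d \<longrightarrow>
      hausdorff_dist (middle_hedgehog K) (middle_hedgehog L) < e" by blast
qed

end
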